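(* Let $(M,\sigma)$ be a Riemannian manifold, $h=\sigma-(dx^0)^2$ on $M\times\mathbb{R}$, and let $u\colon M\to\mathbb{R}$ be smooth with $|\nabla u|_\sigma<1$. Let $g_{ij}=\sigma_{ij}-u_iu_j$ be the induced metric on $\mathrm{graph}\,u$, $v=1/\sqrt{1-|\nabla u|_\sigma^2}$, and $A$ the second fundamental form of $\mathrm{graph}\,u$ in $(M\times\mathbb{R},h)$. Then $|\langle\nabla u,\nabla v\rangle|\le|A|\,|\nabla u|^2$.
   Context: Here $\langle\cdot,\cdot\rangle$, $|\cdot|$ and $\nabla$ are taken with respect to the induced metric $g$. *)

theory Defs
  imports "HOL-Analysis.Analysis"
begin

text \<open>Local-coordinate setting: the Riemannian manifold (M, sigma) is represented by a
coordinate chart, i.e. an open set U of real^'n carrying a smooth field of symmetric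
positive definite matrices sigma x (the metric coefficients sigma_ij).\<close>

definition pd :: "'n::finite \<Rightarrow> (real^'n \<Rightarrow> real) \<Rightarrow> real^'n \<Rightarrow> real" where
  "pd i f x = deriv (\<lambda>t. f (x + t *\<^sub>R axis i 1)) 0"

fun iter_pd :: "'n::finite list \<Rightarrow> (real^'n \<Rightarrow> real) \<Rightarrow> real^'n \<Rightarrow> real" where
  "iter_pd [] f = f"
| "iter_pd (i # is) f = pd i (iter_pd is f)"

definition smooth_on :: "(real^'n::finite) set \<Rightarrow> (real^'n \<Rightarrow> real) \<Rightarrow> bool" where
  "smooth_on U f \<longleftrightarrow> (\<forall>is. \<forall>x\<in>U. iter_pd is f differentiable (at x))"

definition riem_metric_on :: "(real^'n::finite) set \<Rightarrow> (real^'n \<Rightarrow> real^'n^'n) \<Rightarrow> bool" where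
  "riem_metric_on U \<sigma> \<longleftrightarrow>
     (\<forall>i j. smooth_on U (\<lambda>x. \<sigma> x $ i $ j)) \<and>
     (\<forall>x\<in>U. transpose (\<sigma> x) = \<sigma> x \<and> (\<forall>w. w \<noteq> 0 \<longrightarrow> w \<bullet> (\<sigma> x *v w) > 0))"

definition christoffel :: "(real^'n::finite \<Rightarrow> real^'n^'n) \<Rightarrow> real^'n \<Rightarrow> 'n \<Rightarrow> 'n \<Rightarrow> 'n \<Rightarrow> real" where
  "christoffel \<sigma> x k i j = (1/2) * (\<Sum>l\<in>UNIV. matrix_inv (\<sigma> x) $ k $ l *
      (pd i (\<lambda>y. \<sigma> y $ j $ l) x + pd j (\<lambda>y. \<sigma> y $ i $ l) x - pd l (\<lambda>y. \<sigma> y $ i $ j) x))"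

definition Du :: "(real^'n::finite \<Rightarrow> real) \<Rightarrow> real^'n \<Rightarrow> real^'n" where
  "Du u x = (\<chi> i. pd i u x)"

definition gradsq_sigma :: "(real^'n::finite \<Rightarrow> real^'n^'n) \<Rightarrow> (real^'n \<Rightarrow> real) \<Rightarrow> real^'n \<Rightarrow> real" where
  "gradsq_sigma \<sigma> u x = Du u x \<bullet> (matrix_inv (\<sigma> x) *v Du u x)"

definition vfun :: "(real^'n::finite \<Rightarrow> real^'n^'n) \<Rightarrow> (real^'n \<Rightarrow> real) \<Rightarrow> real^'n \<Rightarrow> real" where
  "vfun \<sigma> u x = 1 / sqrt (1 - gradsq_sigma \<sigma> u x)"

definition gind :: "(real^'n::finite \<Rightarrow> real^'n^'n) \<Rightarrow> (real^'n \<Rightarrow> real) \<Rightarrow> real^'n \<Rightarrow> real^'n^'n" where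
  "gind \<sigma> u x = (\<chi> i j. \<sigma> x $ i $ j - pd i u x * pd j u x)"

definition ginv :: "(real^'n::finite \<Rightarrow> real^'n^'n) \<Rightarrow> (real^'n \<Rightarrow> real) \<Rightarrow> real^'n \<Rightarrow> real^'n^'n" where
  "ginv \<sigma> u x = matrix_inv (gind \<sigma> u x)"

text \<open>Ambient Lorentzian product metric h = sigma - (dx^0)^2 on M x R, acting on tangent
vectors (w, a) at a point over x (w the M-part, a the dx^0-part).\<close>
definition hprod :: "(real^'n::finite \<Rightarrow> real^'n^'n) \<Rightarrow> real^'n \<Rightarrow> (real^'n) \<times> real \<Rightarrow> (real^'n) \<times> real \<Rightarrow> real" where
  "hprod \<sigma> x p q = fst p \<bullet> (\<sigma> x *v fst q) - snd p * snd q"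

text \<open>Unit (timelike) normal of graph u: nu = v (sigma^ij u_j d_i + d_0);
h(nu, F_k) = 0 for F_k = d_k + u_k d_0 and h(nu,nu) = -1.\<close>
definition unormal :: "(real^'n::finite \<Rightarrow> real^'n^'n) \<Rightarrow> (real^'n \<Rightarrow> real) \<Rightarrow> real^'n \<Rightarrow> (real^'n) \<times> real" where
  "unormal \<sigma> u x = (vfun \<sigma> u x *\<^sub>R (matrix_inv (\<sigma> x) *v Du u x), vfun \<sigma> u x)"

text \<open>Second fundamental form A_ij = h(nabla^h_{F_i} F_j, nu) of the embedding
F(x) = (x, u(x)).  For the product metric h the only nonzero Christoffel symbols are
those of sigma, so nabla^h_{F_i} F_j = Gamma^k_ij d_k + (d_i d_j u) d_0.\<close>
definition secff :: "(real^'n::finite \<Rightarrow> real^'n^'n) \<Rightarrow> (real^'n \<Rightarrow> real) \<Rightarrow> real^'n \<Rightarrow> 'n \<Rightarrow> 'n \<Rightarrow> real" where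
  "secff \<sigma> u x i j = hprod \<sigma> x ((\<chi> k. christoffel \<sigma> x k i j), pd i (pd j u) x) (unormal \<sigma> u x)"

definition normA :: "(real^'n::finite \<Rightarrow> real^'n^'n) \<Rightarrow> (real^'n \<Rightarrow> real) \<Rightarrow> real^'n \<Rightarrow> real" where
  "normA \<sigma> u x = sqrt (\<Sum>i\<in>UNIV. \<Sum>j\<in>UNIV. \<Sum>k\<in>UNIV. \<Sum>l\<in>UNIV.
      ginv \<sigma> u x $ i $ k * ginv \<sigma> u x $ j $ l * secff \<sigma> u x i j * secff \<sigma> u x k l)"

definition ginner_grad :: "(real^'n::finite \<Rightarrow> real^'n^'n) \<Rightarrow> (real^'n \<Rightarrow> real) \<Rightarrow>
    (real^'n \<Rightarrow> real) \<Rightarrow> (real^'n \<Rightarrow> real) \<Rightarrow> real^'n \<Rightarrow> real" where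
  "ginner_grad \<sigma> u f h x = (\<Sum>i\<in>UNIV. \<Sum>j\<in>UNIV. ginv \<sigma> u x $ i $ j * pd i f x * pd j h x)"

end

theory Submission
  imports Defs
begin

(* Write S = sigma x, p = du, w = S^-1 p and v = (1 - p.w)^(-1/2). Differentiating v along a
   coordinate axis gives d_j v = -v^2 A_ja w^a: the derivative of S^-1 hidden in |du|^2 is exactly
   what the Christoffel symbols in A account for. Since g = S - p p^T, the Sherman-Morrison formula
   gives g^-1 p = v^2 w, so <grad u, grad v> = -A(xi, xi) for xi = g^-1 p, whose squared g-length is
   |grad u|^2. The claim is then the Cauchy-Schwarz inequality |A(xi, xi)| <= |A| |xi|^2, proved via
   a Cholesky factorisation g^-1 = R R^T.

   No derivative of the matrix inverse is ever formed: p.S^-1 p is the maximum over w of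
   2 p.w - w.S w, with a defect quadratic in p - S w, so it has the same derivative as this
   functional, which is affine in (p, S), at the maximiser. *)

section \<open>Positive definite matrices\<close>

definition pos_def :: "real^'n::finite^'n \<Rightarrow> bool" where
  "pos_def S \<longleftrightarrow> transpose S = S \<and> (\<forall>w. w \<noteq> 0 \<longrightarrow> 0 < w \<bullet> (S *v w))"

lemma quadratic_form_sum:
  fixes M :: "real^'n::finite^'n"
  shows "y \<bullet> (M *v z) = (\<Sum>a\<in>UNIV. \<Sum>b\<in>UNIV. y$a * M$a$b * z$b)"
  by (simp add: inner_vec_def matrix_vector_mult_def sum_distrib_left mult.assoc)

lemma symmetric_matrix_entry: "transpose M = M \<Longrightarrow> M$i$j = M$j$i"
  by (metis transpose_def vec_lambda_beta)

lemma symmetric_matrix_inner: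
  fixes M :: "real^'n::finite^'n"
  assumes "transpose M = M"
  shows "x \<bullet> (M *v y) = (M *v x) \<bullet> y"
  by (metis assms dot_lmul_matrix transpose_matrix_vector)

lemma inner_matrix_vector_transpose:
  fixes A :: "real^'m::finite^'n::finite"
  shows "(A *v x) \<bullet> y = x \<bullet> (transpose A *v y)"
  by (metis dot_lmul_matrix inner_commute transpose_matrix_vector)

lemma invertible_matrix_inv:
  assumes "invertible A"
  shows "A ** matrix_inv A = mat 1" and "matrix_inv A ** A = mat 1"
  using someI_ex[OF assms[unfolded invertible_def]] by (simp_all add: matrix_inv_def)

lemma invertible_matrix_inv_vector:
  fixes A :: "'a::comm_semiring_1^'n::finite^'n"
  assumes "invertible A"
  shows "A *v (matrix_inv A *v x) = x" and "matrix_inv A *v (A *v x) = x"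
  by (simp_all add: matrix_vector_mul_assoc invertible_matrix_inv[OF assms])

lemma pos_def_invertible:
  assumes "pos_def S"
  shows "invertible S"
proof -
  have "inj ((*v) S)"
  proof (rule injI)
    fix a b assume "S *v a = S *v b"
    then have "(a - b) \<bullet> (S *v (a - b)) = 0" by (simp add: matrix_vector_mult_diff_distrib)
    then show "a = b" using assms unfolding pos_def_def by (metis less_irrefl right_minus_eq)
  qed
  then show ?thesis using matrix_left_invertible_injective invertible_left_inverse by blast
qed

lemma pos_def_matrix_inv:
  assumes "pos_def S"
  shows "pos_def (matrix_inv S)"
proof -
  have inv: "invertible S" using pos_def_invertible[OF assms] .
  have sym: "transpose S = S" using assms by (simp add: pos_def_def)
  have "transpose (matrix_inv S) ** S = mat 1"
    by (metis invertible_matrix_inv(1)[OF inv] matrix_transpose_mul sym transpose_mat)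
  then have "transpose (matrix_inv S) = matrix_inv S"
    by (metis invertible_matrix_inv(1)[OF inv] matrix_mul_assoc matrix_mul_lid matrix_mul_rid)
  moreover have "0 < z \<bullet> (matrix_inv S *v z)" if "z \<noteq> 0" for z
  proof -
    define y where "y = matrix_inv S *v z"
    have "S *v y = z" by (simp add: y_def invertible_matrix_inv_vector[OF inv])
    then have "y \<noteq> 0" using that by auto
    then show ?thesis using assms \<open>S *v y = z\<close>
      by (auto simp: pos_def_def y_def[symmetric] inner_commute)
  qed
  ultimately show ?thesis by (simp add: pos_def_def)
qed

lemma schur_complement_quadratic_form:
  fixes G :: "'a \<Rightarrow> 'a \<Rightarrow> real" and x :: "'a \<Rightarrow> real"
  assumes "finite I" "m \<notin> I" "\<And>i k. G i k = G k i" "G m m \<noteq> 0"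
  defines "c \<equiv> (\<Sum>k\<in>I. G m k * x k)"
  shows "(\<Sum>i\<in>insert m I. \<Sum>k\<in>insert m I. G i k * (x(m := - c / G m m)) i * (x(m := - c / G m m)) k)
       = (\<Sum>i\<in>I. \<Sum>k\<in>I. (G i k - G i m * G m k / G m m) * x i * x k)"
proof -
  define y where "y = x(m := - c / G m m)"
  have yI: "y i = x i" if "i \<in> I" for i using that assms(2) by (auto simp: y_def)
  have c': "(\<Sum>i\<in>I. G i m * x i) = c" unfolding c_def using assms(3) by (metis (no_types, lifting) sum.cong)
  have "(\<Sum>i\<in>insert m I. \<Sum>k\<in>insert m I. G i k * y i * y k)
      = G m m * y m * y m + y m * (\<Sum>k\<in>I. G m k * x k) + y m * (\<Sum>i\<in>I. G i m * x i)
        + (\<Sum>i\<in>I. \<Sum>k\<in>I. G i k * x i * x k)"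
    using assms(1,2) yI by (simp add: sum.distrib sum_distrib_left algebra_simps cong: sum.cong)
  also have "\<dots> = G m m * y m * y m + y m * c + y m * c + (\<Sum>i\<in>I. \<Sum>k\<in>I. G i k * x i * x k)"
    by (simp only: c' flip: c_def)
  also have "\<dots> = (\<Sum>i\<in>I. \<Sum>k\<in>I. G i k * x i * x k) - c * c / G m m"
    using assms(4) by (simp add: y_def field_simps)
  also have "c * c / G m m = (\<Sum>i\<in>I. G i m * x i) * (\<Sum>k\<in>I. G m k * x k) / G m m"
    by (simp only: c' flip: c_def)
  also have "\<dots> = (\<Sum>i\<in>I. \<Sum>k\<in>I. G i m * G m k / G m m * x i * x k)"
    by (simp add: sum_product sum_divide_distrib mult_ac)
  finally show ?thesis
    by (simp add: y_def left_diff_distrib sum_subtractf)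
qed

lemma pos_def_factorization_on:
  fixes G :: "'a \<Rightarrow> 'a \<Rightarrow> real"
  assumes "finite I" "\<And>i k. G i k = G k i"
    and "\<And>x. \<exists>i\<in>I. x i \<noteq> 0 \<Longrightarrow> 0 < (\<Sum>i\<in>I. \<Sum>k\<in>I. G i k * x i * x k)"
  shows "\<exists>r. \<forall>i\<in>I. \<forall>k\<in>I. G i k = (\<Sum>j\<in>I. r i j * r k j)"
  using assms
proof (induction I arbitrary: G rule: finite_induct)
  case empty
  then show ?case by auto
next
  case (insert m I)
  define a where "a = G m m"
  have "0 < (\<Sum>i\<in>insert m I. \<Sum>k\<in>insert m I. G i k * of_bool (i = m) * of_bool (k = m))"
    by (rule insert.prems(2)) simp
  moreover have "\<And>i. i \<in> I \<Longrightarrow> i \<noteq> m" using insert.hyps by auto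
  ultimately have a_pos: "0 < a" using insert.hyps by (simp add: a_def cong: sum.cong)
  define G' where "G' i k = G i k - G i m * G m k / a" for i k
  have "0 < (\<Sum>i\<in>I. \<Sum>k\<in>I. G' i k * x i * x k)" if "\<exists>i\<in>I. x i \<noteq> 0" for x
  proof -
    define c where "c = (\<Sum>k\<in>I. G m k * x k)"
    have "\<exists>i\<in>insert m I. (x(m := - c / a)) i \<noteq> 0" using that insert.hyps by auto
    from insert.prems(2)[OF this] show ?thesis
      using schur_complement_quadratic_form[where G = G and x = x, OF insert.hyps insert.prems(1)] a_pos
      by (simp add: G'_def a_def c_def)
  qed
  moreover have "G' i k = G' k i" for i k using insert.prems(1) by (simp add: G'_def)
  ultimately obtain r where r: "\<forall>i\<in>I. \<forall>k\<in>I. G' i k = (\<Sum>j\<in>I. r i j * r k j)"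
    using insert.IH by blast
  \<comment> \<open>one Cholesky step: the pivot column, then the factor of the Schur complement\<close>
  define r' where "r' i j = (if j = m then (if i = m then sqrt a else G i m / sqrt a)
      else (if i = m then 0 else r i j))" for i j
  have "G i k = (\<Sum>j\<in>insert m I. r' i j * r' k j)" if "i \<in> insert m I" "k \<in> insert m I" for i k
  proof -
    have "r' i j = (if i = m then 0 else r i j)" if "j \<in> I" for i j
      using that insert.hyps by (auto simp: r'_def)
    then have "(\<Sum>j\<in>insert m I. r' i j * r' k j)
        = r' i m * r' k m + (\<Sum>j\<in>I. (if i = m then 0 else r i j) * (if k = m then 0 else r k j))"
      using insert.hyps by (simp cong: sum.cong)
    moreover have "sqrt a * sqrt a = a" "sqrt a \<noteq> 0" using a_pos by simp_all
    ultimately show ?thesis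
      using that r insert.prems(1) by (auto simp: r'_def G'_def a_def field_simps)
  qed
  then show ?case by blast
qed

lemma pos_def_factorization:
  fixes S :: "real^'n::finite^'n"
  assumes "pos_def S"
  obtains R :: "real^'n^'n" where "S = R ** transpose R"
proof -
  have pos: "0 < (\<Sum>i\<in>UNIV. \<Sum>k\<in>UNIV. S$i$k * x i * x k)" if "\<exists>i\<in>UNIV. x i \<noteq> 0" for x
  proof -
    have "vec_lambda x \<noteq> 0" using that by (auto simp: vec_eq_iff)
    with assms have "0 < vec_lambda x \<bullet> (S *v vec_lambda x)" by (simp add: pos_def_def)
    then show ?thesis by (simp add: quadratic_form_sum mult_ac)
  qed
  have "S$i$k = S$k$i" for i k
    using assms by (simp add: pos_def_def symmetric_matrix_entry)
  with pos have "\<exists>r. \<forall>i\<in>UNIV. \<forall>k\<in>UNIV. S$i$k = (\<Sum>j::'n\<in>UNIV. r i j * r k j)"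
    by (intro pos_def_factorization_on[of UNIV "\<lambda>i k. S$i$k"]) auto
  then obtain r where "\<forall>i k. S$i$k = (\<Sum>j::'n\<in>UNIV. r i j * r k j)" by blast
  then have "S = (\<chi> i j. r i j) ** transpose (\<chi> i j. r i j)"
    by (simp add: vec_eq_iff matrix_matrix_mult_def transpose_def)
  then show ?thesis by (rule that)
qed

lemma factorization_inner:
  fixes R :: "real^'m::finite^'n::finite"
  shows "a \<bullet> ((R ** transpose R) *v b) = (transpose R *v a) \<bullet> (transpose R *v b)"
  by (simp add: matrix_vector_mul_assoc[symmetric] dot_lmul_matrix[symmetric] transpose_matrix_vector)

lemma pos_def_cauchy_schwarz:
  fixes S :: "real^'n::finite^'n"
  assumes "pos_def S"
  shows "(a \<bullet> (S *v b))\<^sup>2 \<le> (a \<bullet> (S *v a)) * (b \<bullet> (S *v b))"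
proof -
  obtain R :: "real^'n^'n" where S: "S = R ** transpose R" using pos_def_factorization[OF assms] .
  show ?thesis
    unfolding S factorization_inner by (rule Cauchy_Schwarz_ineq)
qed

lemma pos_def_lower_bound:
  assumes "pos_def S"
  obtains c where "0 < c" "\<And>y. c * (norm y)\<^sup>2 \<le> y \<bullet> (S *v y)"
proof -
  have cont: "continuous_on (sphere 0 1) (\<lambda>y. y \<bullet> (S *v y))"
    by (intro continuous_intros linear_continuous_on matrix_vector_mul_bounded_linear)
  obtain y0 where y0: "y0 \<in> sphere 0 1" and min: "\<And>y. y \<in> sphere 0 1 \<Longrightarrow> y0 \<bullet> (S *v y0) \<le> y \<bullet> (S *v y)"
    using continuous_attains_inf[OF compact_sphere _ cont] by auto
  define c where "c = y0 \<bullet> (S *v y0)"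
  have "y0 \<noteq> 0" using y0 by auto
  then have "0 < c" using assms by (simp add: pos_def_def c_def)
  moreover have "c * (norm y)\<^sup>2 \<le> y \<bullet> (S *v y)" for y
  proof (cases "y = 0")
    case False
    then have "y /\<^sub>R norm y \<in> sphere 0 1" by simp
    then have "c \<le> (y /\<^sub>R norm y) \<bullet> (S *v (y /\<^sub>R norm y))" unfolding c_def by (rule min)
    also have "\<dots> = (y \<bullet> (S *v y)) / (norm y)\<^sup>2"
      by (simp add: matrix_vector_mult_scaleR power2_eq_square divide_inverse)
    finally show ?thesis using False by (simp add: field_simps)
  qed simp
  ultimately show ?thesis by (rule that)
qed

lemma quadratic_form_abs_le:
  fixes E :: "real^'n::finite^'n"
  shows "\<bar>y \<bullet> (E *v y)\<bar> \<le> (\<Sum>a\<in>UNIV. \<Sum>b\<in>UNIV. \<bar>E$a$b\<bar>) * (norm y)\<^sup>2"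
proof -
  have "\<bar>y \<bullet> (E *v y)\<bar> \<le> norm y * norm (E *v y)" by (rule Cauchy_Schwarz_ineq2)
  also have "\<dots> \<le> norm y * (onorm ((*v) E) * norm y)"
    by (intro mult_left_mono onorm[OF matrix_vector_mul_bounded_linear]) simp
  also have "\<dots> \<le> norm y * ((\<Sum>a\<in>UNIV. \<Sum>b\<in>UNIV. \<bar>E$a$b\<bar>) * norm y)"
    by (intro mult_left_mono mult_right_mono onorm_le_matrix_component_sum) simp_all
  finally show ?thesis by (simp add: power2_eq_square mult_ac)
qed

lemma rank_one_update_mult:
  fixes S :: "real^'n::finite^'n"
  shows "(\<chi> i j. S$i$j - p$i * p$j) *v y = S *v y - (p \<bullet> y) *\<^sub>R p"
  by (simp add: vec_eq_iff matrix_vector_mult_def inner_vec_def algebra_simps sum_subtractf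
      sum_distrib_left)

lemma pos_def_rank_one_update:
  assumes "pos_def S" and "p \<bullet> (matrix_inv S *v p) < 1"
  shows "pos_def (\<chi> i j. S$i$j - p$i * p$j)"
proof -
  define w where "w = matrix_inv S *v p"
  have sym: "transpose S = S" using assms(1) by (simp add: pos_def_def)
  have Sw: "S *v w = p" by (simp add: w_def invertible_matrix_inv_vector pos_def_invertible assms(1))
  have "y \<bullet> ((\<chi> i j. S$i$j - p$i * p$j) *v y) > 0" if "y \<noteq> 0" for y
  proof -
    have pos: "0 < y \<bullet> (S *v y)" using assms(1) that by (simp add: pos_def_def)
    have "(p \<bullet> y)\<^sup>2 = (w \<bullet> (S *v y))\<^sup>2" by (simp add: symmetric_matrix_inner[OF sym] Sw)
    also have "\<dots> \<le> (w \<bullet> (S *v w)) * (y \<bullet> (S *v y))" by (rule pos_def_cauchy_schwarz[OF assms(1)])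
    also have "\<dots> < y \<bullet> (S *v y)"
      using mult_strict_right_mono[OF assms(2)[folded w_def] pos] by (simp add: Sw inner_commute)
    finally show ?thesis by (simp add: rank_one_update_mult inner_diff_right power2_eq_square inner_commute)
  qed
  moreover have "transpose (\<chi> i j. S$i$j - p$i * p$j) = (\<chi> i j. S$i$j - p$i * p$j)"
    using symmetric_matrix_entry[OF sym] by (simp add: vec_eq_iff transpose_def mult.commute)
  ultimately show ?thesis by (simp add: pos_def_def)
qed

lemma rank_one_update_inverse:
  assumes "pos_def S" and "p \<bullet> (matrix_inv S *v p) < 1"
  shows "matrix_inv (\<chi> i j. S$i$j - p$i * p$j) *v p
       = (1 / (1 - p \<bullet> (matrix_inv S *v p))) *\<^sub>R (matrix_inv S *v p)"
proof -
  define M where "M = (\<chi> i j. S$i$j - p$i * p$j)"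
  define w where "w = matrix_inv S *v p"
  have inv: "invertible M"
    unfolding M_def by (rule pos_def_invertible[OF pos_def_rank_one_update[OF assms]])
  have Sw: "S *v w = p" by (simp add: w_def invertible_matrix_inv_vector pos_def_invertible assms(1))
  have "M *v w = (1 - p \<bullet> w) *\<^sub>R p"
    unfolding M_def rank_one_update_mult Sw by (simp add: scaleR_diff_left)
  moreover have "1 - p \<bullet> w \<noteq> 0" using assms(2) by (simp add: w_def)
  ultimately have "p = (1 / (1 - p \<bullet> w)) *\<^sub>R (M *v w)" by simp
  then have "matrix_inv M *v p = (1 / (1 - p \<bullet> w)) *\<^sub>R (matrix_inv M *v (M *v w))"
    by (metis matrix_vector_mult_scaleR)
  then show ?thesis unfolding invertible_matrix_inv_vector(2)[OF inv] by (simp add: M_def w_def)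
qed

lemma sum_swap_pairs:
  "(\<Sum>a\<in>A. \<Sum>b\<in>B. \<Sum>c\<in>C. \<Sum>d\<in>D. f a b c d) = (\<Sum>c\<in>C. \<Sum>d\<in>D. \<Sum>a\<in>A. \<Sum>b\<in>B. f a b c d)"
proof -
  have "(\<Sum>a\<in>A. \<Sum>b\<in>B. \<Sum>c\<in>C. \<Sum>d\<in>D. f a b c d) = (\<Sum>a\<in>A. \<Sum>c\<in>C. \<Sum>b\<in>B. \<Sum>d\<in>D. f a b c d)"
    by (intro sum.cong refl sum.swap)
  also have "\<dots> = (\<Sum>c\<in>C. \<Sum>a\<in>A. \<Sum>b\<in>B. \<Sum>d\<in>D. f a b c d)" by (rule sum.swap)
  also have "\<dots> = (\<Sum>c\<in>C. \<Sum>d\<in>D. \<Sum>a\<in>A. \<Sum>b\<in>B. f a b c d)"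
    by (intro sum.cong refl) (subst sum.swap, intro sum.cong refl sum.swap)
  finally show ?thesis .
qed

lemma quadratic_form_le_frobenius:
  fixes B :: "real^'n::finite^'n"
  shows "\<bar>q \<bullet> (B *v q)\<bar> \<le> sqrt (\<Sum>a\<in>UNIV. \<Sum>b\<in>UNIV. (B$a$b)\<^sup>2) * (norm q)\<^sup>2"
proof -
  define F where "F = (\<Sum>a\<in>UNIV. \<Sum>b\<in>UNIV. (B$a$b)\<^sup>2)"
  have "(q \<bullet> (B *v q))\<^sup>2 = (\<Sum>(a, b)\<in>UNIV \<times> UNIV. (q$a * q$b) * B$a$b)\<^sup>2"
    by (simp add: quadratic_form_sum sum.cartesian_product mult_ac)
  also have "\<dots> \<le> (\<Sum>(a, b)\<in>UNIV \<times> UNIV. (q$a * q$b)\<^sup>2) * F"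
    using Cauchy_Schwarz_ineq_sum[of "\<lambda>(a, b). q$a * q$b" "\<lambda>(a, b). B$a$b" "UNIV \<times> UNIV"]
    by (simp add: F_def sum.cartesian_product case_prod_beta)
  also have "(\<Sum>(a, b)\<in>UNIV \<times> UNIV. (q$a * q$b)\<^sup>2) = ((norm q)\<^sup>2)\<^sup>2"
  proof -
    have "(norm q)\<^sup>2 = (\<Sum>a\<in>UNIV. q$a * q$a)" by (simp add: power2_norm_eq_inner inner_vec_def)
    then show ?thesis
      by (simp add: sum.cartesian_product[symmetric] sum_product power2_eq_square mult_ac
          del: UNIV_Times_UNIV)
  qed
  finally have "\<bar>q \<bullet> (B *v q)\<bar> \<le> sqrt (((norm q)\<^sup>2)\<^sup>2 * F)" by (rule real_le_rsqrt[of "\<bar>_\<bar>", simplified])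
  also have "\<dots> = sqrt F * (norm q)\<^sup>2" by (simp only: real_sqrt_mult real_sqrt_abs abs_power2 mult.commute)
  finally show ?thesis unfolding F_def .
qed

lemma frobenius_norm_congruence:
  fixes R :: "real^'n::finite^'n" and A :: "real^'n^'n"
  defines "G \<equiv> R ** transpose R"
  shows "(\<Sum>a\<in>UNIV. \<Sum>b\<in>UNIV. ((transpose R ** A ** R)$a$b)\<^sup>2)
       = (\<Sum>i\<in>UNIV. \<Sum>j\<in>UNIV. \<Sum>k\<in>UNIV. \<Sum>l\<in>UNIV. G$i$k * G$j$l * A$i$j * A$k$l)"
proof -
  have entry: "(transpose R ** A ** R)$a$b = (\<Sum>i\<in>UNIV. \<Sum>j\<in>UNIV. R$i$a * A$i$j * R$j$b)"
    for a b
    unfolding matrix_matrix_mult_def transpose_def by (subst sum.swap) (simp add: sum_distrib_right)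
  have "((transpose R ** A ** R)$a$b)\<^sup>2 = (\<Sum>i\<in>UNIV. \<Sum>k\<in>UNIV. \<Sum>j\<in>UNIV. \<Sum>l\<in>UNIV.
      (R$i$a * R$k$a) * (R$j$b * R$l$b) * A$i$j * A$k$l)" for a b
    by (simp add: entry power2_eq_square sum_product mult_ac)
  also have "\<dots> a b = (\<Sum>i\<in>UNIV. \<Sum>j\<in>UNIV. \<Sum>k\<in>UNIV. \<Sum>l\<in>UNIV.
      (R$i$a * R$k$a) * (R$j$b * R$l$b) * A$i$j * A$k$l)" for a b
    by (intro sum.cong refl sum.swap)
  finally have "(\<Sum>a\<in>UNIV. \<Sum>b\<in>UNIV. ((transpose R ** A ** R)$a$b)\<^sup>2)
      = (\<Sum>a\<in>UNIV. \<Sum>b\<in>UNIV. \<Sum>i\<in>UNIV. \<Sum>j\<in>UNIV. \<Sum>k\<in>UNIV. \<Sum>l\<in>UNIV.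
          (R$i$a * R$k$a) * (R$j$b * R$l$b) * A$i$j * A$k$l)"
    by simp
  also have "\<dots> = (\<Sum>i\<in>UNIV. \<Sum>j\<in>UNIV. \<Sum>k\<in>UNIV. \<Sum>l\<in>UNIV. \<Sum>a\<in>UNIV. \<Sum>b\<in>UNIV.
          (R$i$a * R$k$a) * (R$j$b * R$l$b) * A$i$j * A$k$l)"
    by (subst sum_swap_pairs) (intro sum.cong refl sum_swap_pairs)
  also have "\<dots> = (\<Sum>i\<in>UNIV. \<Sum>j\<in>UNIV. \<Sum>k\<in>UNIV. \<Sum>l\<in>UNIV. G$i$k * G$j$l * A$i$j * A$k$l)"
    by (simp add: G_def matrix_matrix_mult_def transpose_def sum_product) (simp add: sum_distrib_right)
  finally show ?thesis .
qed

lemma pos_def_tensor_form_bound: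
  fixes G A :: "real^'n::finite^'n"
  assumes "pos_def G"
  shows "\<bar>(G *v p) \<bullet> (A *v (G *v p))\<bar>
     \<le> sqrt (\<Sum>i\<in>UNIV. \<Sum>j\<in>UNIV. \<Sum>k\<in>UNIV. \<Sum>l\<in>UNIV. G$i$k * G$j$l * A$i$j * A$k$l)
        * (p \<bullet> (G *v p))"
proof -
  obtain R :: "real^'n^'n" where G: "G = R ** transpose R" using pos_def_factorization[OF assms] .
  define q where "q = transpose R *v p"
  have "G *v p = R *v q" unfolding G q_def matrix_vector_mul_assoc ..
  then have "(G *v p) \<bullet> (A *v (G *v p)) = q \<bullet> ((transpose R ** A ** R) *v q)"
    by (simp add: inner_matrix_vector_transpose flip: matrix_vector_mul_assoc)
  then show ?thesis
    using quadratic_form_le_frobenius[of q "transpose R ** A ** R"] frobenius_norm_congruence[of R A]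
    by (simp add: G factorization_inner q_def power2_norm_eq_inner)
qed

section \<open>Differentiating the inverse quadratic form\<close>

lemma inverse_form_tangent_estimate:
  fixes S :: "real^'n::finite^'n" and P w :: "real^'n"
  assumes "pos_def S" "0 < c" "\<And>y. c * (norm y)\<^sup>2 \<le> y \<bullet> (S *v y)"
  defines "\<delta> \<equiv> P \<bullet> (matrix_inv S *v P) - (2 * (P \<bullet> w) - w \<bullet> (S *v w))"
  shows "0 \<le> \<delta>" and "\<delta> \<le> (norm (P - S *v w))\<^sup>2 / c"
proof -
  define z where "z = matrix_inv S *v P - w"
  define r where "r = P - S *v w"
  have Sz: "S *v z = r"
    by (simp add: z_def r_def matrix_vector_mult_diff_distrib invertible_matrix_inv_vector
        pos_def_invertible assms(1))
  have "\<delta> = z \<bullet> (S *v z)"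
    using symmetric_matrix_inner[of S "matrix_inv S *v P" w] assms(1)
    by (simp add: \<delta>_def z_def matrix_vector_mult_diff_distrib inner_diff_left inner_diff_right
        invertible_matrix_inv_vector pos_def_invertible pos_def_def inner_commute)
  then have \<delta>: "\<delta> = z \<bullet> r" by (simp add: Sz)
  have lower: "c * (norm z)\<^sup>2 \<le> z \<bullet> r" using assms(3)[of z] by (simp add: Sz)
  then show "0 \<le> \<delta>" using \<delta> assms(2) by (smt (verit) mult_nonneg_nonneg zero_le_power2)
  have cs: "z \<bullet> r \<le> norm z * norm r" by (rule norm_cauchy_schwarz)
  have "c * norm z \<le> norm r"
  proof (cases "z = 0")
    case False
    have "norm z * (c * norm z) \<le> norm z * norm r"
      using order_trans[OF lower cs] by (simp add: power2_eq_square mult_ac)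
    then show ?thesis using False by (simp add: mult_le_cancel_left_pos)
  qed simp
  then have "norm r * (c * norm z) \<le> norm r * norm r" by (rule mult_left_mono) simp
  then have "norm z * norm r \<le> (norm r)\<^sup>2 / c"
    using assms(2) by (simp add: field_simps power2_eq_square mult_ac)
  then show "\<delta> \<le> (norm (P - S *v w))\<^sup>2 / c" using \<delta> cs by (simp add: r_def)
qed

lemma pos_def_uniformly_near:
  fixes S :: "'a \<Rightarrow> real^'n::finite^'n"
  assumes "pos_def S0" and "\<And>a b. ((\<lambda>t. S t $ a $ b) \<longlongrightarrow> S0 $ a $ b) F"
  obtains c where "0 < c" "\<forall>\<^sub>F t in F. \<forall>y. c * (norm y)\<^sup>2 \<le> y \<bullet> (S t *v y)"
proof -
  obtain c where c: "0 < c" "\<And>y. c * (norm y)\<^sup>2 \<le> y \<bullet> (S0 *v y)"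
    using pos_def_lower_bound[OF assms(1)] by blast
  define E where "E t = (\<Sum>a\<in>UNIV. \<Sum>b\<in>UNIV. \<bar>(S t - S0)$a$b\<bar>)" for t
  have "(E \<longlongrightarrow> (\<Sum>a\<in>UNIV. \<Sum>b\<in>UNIV. \<bar>S0$a$b - S0$a$b\<bar>)) F"
    unfolding E_def vector_minus_component by (intro tendsto_intros assms(2))
  then have "(E \<longlongrightarrow> 0) F" by simp
  then have "\<forall>\<^sub>F t in F. E t < c / 2" by (rule order_tendstoD(2)) (use c(1) in simp)
  then have "\<forall>\<^sub>F t in F. \<forall>y. c / 2 * (norm y)\<^sup>2 \<le> y \<bullet> (S t *v y)"
  proof (rule eventually_mono, intro allI)
    fix t and y :: "real^'n"
    assume "E t < c / 2"
    then have "E t * (norm y)\<^sup>2 \<le> c / 2 * (norm y)\<^sup>2" by (intro mult_right_mono) simp_all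
    moreover have "\<bar>y \<bullet> ((S t - S0) *v y)\<bar> \<le> E t * (norm y)\<^sup>2"
      unfolding E_def by (rule quadratic_form_abs_le)
    moreover have "y \<bullet> (S t *v y) = y \<bullet> (S0 *v y) + y \<bullet> ((S t - S0) *v y)"
      by (simp add: matrix_vector_mult_diff_rdistrib inner_diff_right)
    ultimately show "c / 2 * (norm y)\<^sup>2 \<le> y \<bullet> (S t *v y)" using c(2)[of y] by linarith
  qed
  then show ?thesis using c(1) by (intro that[of "c / 2"]) simp_all
qed

lemma has_real_derivative_zero_if_quadratic_bound:
  fixes g :: "real \<Rightarrow> real" and r :: "real \<Rightarrow> real^'n::finite"
  assumes "\<And>a. ((\<lambda>t. r t $ a) has_real_derivative r' $ a) (at 0)" and "r 0 = 0" and "g 0 = 0"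
    and "\<forall>\<^sub>F t in at 0. \<bar>g t\<bar> \<le> C * (norm (r t))\<^sup>2"
  shows "(g has_real_derivative 0) (at 0)"
proof -
  have "((\<lambda>t. r t /\<^sub>R t) \<longlongrightarrow> r') (at 0)"
  proof (rule vec_tendstoI)
    fix a
    have "((\<lambda>t. r t $ a / t) \<longlongrightarrow> r' $ a) (at 0)"
      using assms(1)[of a] assms(2) by (simp add: has_field_derivative_iff)
    then show "((\<lambda>t. (r t /\<^sub>R t) $ a) \<longlongrightarrow> r' $ a) (at 0)" by (simp add: divide_inverse_commute)
  qed
  moreover have "(r \<longlongrightarrow> 0) (at 0)"
    using assms(2) DERIV_isCont[OF assms(1)] by (intro vec_tendstoI) (simp add: isCont_def)
  ultimately have "((\<lambda>t. C * norm (r t) * norm (r t /\<^sub>R t)) \<longlongrightarrow> C * 0 * norm r') (at 0)"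
    by (intro tendsto_intros) (simp_all add: tendsto_norm_zero)
  then have bound_lim: "((\<lambda>t. C * norm (r t) * norm (r t /\<^sub>R t)) \<longlongrightarrow> 0) (at 0)" by simp
  have "\<forall>\<^sub>F t in at 0. norm (g t / t) \<le> C * norm (r t) * norm (r t /\<^sub>R t)"
    using assms(4)
  proof eventually_elim
    case (elim t)
    have "norm (g t / t) \<le> C * (norm (r t))\<^sup>2 / \<bar>t\<bar>"
      using divide_right_mono[OF elim abs_ge_zero[of t]] by (simp add: abs_divide)
    also have "\<dots> = C * norm (r t) * norm (r t /\<^sub>R t)"
      by (simp add: power2_eq_square divide_inverse mult_ac)
    finally show ?case .
  qed
  from Lim_null_comparison[OF this bound_lim] have "((\<lambda>t. g t / t) \<longlongrightarrow> 0) (at 0)" .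
  then show ?thesis using assms(3) by (simp add: has_field_derivative_iff)
qed

lemma inverse_form_has_real_derivative:
  fixes P :: "real \<Rightarrow> real^'n::finite" and S :: "real \<Rightarrow> real^'n^'n"
  assumes dP: "\<And>a. ((\<lambda>t. P t $ a) has_real_derivative P' $ a) (at 0)"
    and dS: "\<And>a b. ((\<lambda>t. S t $ a $ b) has_real_derivative S' $ a $ b) (at 0)"
    and pos: "\<forall>\<^sub>F t in at 0. pos_def (S t)" and pos0: "pos_def (S 0)"
  defines "w \<equiv> matrix_inv (S 0) *v P 0"
  shows "((\<lambda>t. P t \<bullet> (matrix_inv (S t) *v P t)) has_real_derivative 2 * (P' \<bullet> w) - w \<bullet> (S' *v w)) (at 0)"
proof -
  define f where "f t = P t \<bullet> (matrix_inv (S t) *v P t)" for t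
  define \<phi> where "\<phi> t = 2 * (P t \<bullet> w) - w \<bullet> (S t *v w)" for t
  define r where "r t = P t - S t *v w" for t
  have "\<phi> = (\<lambda>t. 2 * (\<Sum>a\<in>UNIV. P t $ a * w $ a) - (\<Sum>a\<in>UNIV. \<Sum>b\<in>UNIV. w $ a * S t $ a $ b * w $ b))"
    by (simp add: fun_eq_iff \<phi>_def quadratic_form_sum) (simp add: inner_vec_def)
  then have "(\<phi> has_real_derivative
      2 * (\<Sum>a\<in>UNIV. P' $ a * w $ a) - (\<Sum>a\<in>UNIV. \<Sum>b\<in>UNIV. w $ a * S' $ a $ b * w $ b)) (at 0)"
    by (simp only:) (intro DERIV_diff DERIV_cmult DERIV_sum DERIV_cmult_right dP dS)
  then have d\<phi>: "(\<phi> has_real_derivative 2 * (P' \<bullet> w) - w \<bullet> (S' *v w)) (at 0)"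
    by (simp add: quadratic_form_sum) (simp add: inner_vec_def)
  have "(\<lambda>t. r t $ a) = (\<lambda>t. P t $ a - (\<Sum>b\<in>UNIV. S t $ a $ b * w $ b))" for a
    by (simp add: fun_eq_iff r_def matrix_vector_mult_def)
  then have dr: "((\<lambda>t. r t $ a) has_real_derivative (P' - S' *v w) $ a) (at 0)" for a
    by (simp add: matrix_vector_mult_def) (intro DERIV_diff DERIV_sum DERIV_cmult_right dP dS)
  have Sw: "S 0 *v w = P 0"
    by (simp add: w_def invertible_matrix_inv_vector pos_def_invertible pos0)
  then have r0: "r 0 = 0" by (simp add: r_def)
  have "((\<lambda>t. S t $ a $ b) \<longlongrightarrow> S 0 $ a $ b) (at 0)" for a b
    using DERIV_isCont[OF dS] by (simp add: isCont_def)
  then obtain c where c: "0 < c" "\<forall>\<^sub>F t in at 0. \<forall>y. c * (norm y)\<^sup>2 \<le> y \<bullet> (S t *v y)"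
    using pos_def_uniformly_near[OF pos0] by blast
  have "\<forall>\<^sub>F t in at 0. \<bar>f t - \<phi> t\<bar> \<le> 1 / c * (norm (r t))\<^sup>2"
    using pos c(2)
  proof eventually_elim
    case (elim t)
    from inverse_form_tangent_estimate[OF elim(1) c(1), of "P t" w] elim(2)
    show ?case by (simp add: f_def \<phi>_def r_def)
  qed
  moreover have "f 0 - \<phi> 0 = 0"
    using Sw by (simp add: f_def \<phi>_def w_def[symmetric] inner_commute)
  ultimately have "((\<lambda>t. f t - \<phi> t) has_real_derivative 0) (at 0)"
    by (intro has_real_derivative_zero_if_quadratic_bound[OF dr r0])
  from DERIV_add[OF this d\<phi>] show ?thesis by (simp add: f_def)
qed

section \<open>The graph of u in coordinates\<close>

lemma pd_has_real_derivative:
  fixes f :: "real^'n::finite \<Rightarrow> real"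
  assumes "f differentiable (at x)"
  shows "((\<lambda>t. f (x + t *\<^sub>R axis i 1)) has_real_derivative pd i f x) (at 0)"
proof -
  obtain f' where f': "(f has_derivative f') (at x)" using assms by (auto simp: differentiable_def)
  have "((\<lambda>t. x + t *\<^sub>R axis i 1) has_derivative (\<lambda>t. t *\<^sub>R axis i 1)) (at 0)"
    by (auto intro!: derivative_eq_intros)
  from has_derivative_compose[OF this, of f f'] have
    "((\<lambda>t. f (x + t *\<^sub>R axis i 1)) has_derivative (\<lambda>t. t * f' (axis i 1))) (at 0)"
    using f' linear_scale[OF has_derivative_linear[OF f']] by simp
  then have d: "((\<lambda>t. f (x + t *\<^sub>R axis i 1)) has_real_derivative f' (axis i 1)) (at 0)"
    by (simp add: has_field_derivative_def mult_commute_abs)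
  moreover from d have "pd i f x = f' (axis i 1)" unfolding pd_def by (rule DERIV_imp_deriv)
  ultimately show ?thesis by simp
qed

lemma pos_def_riem_metric:
  assumes "riem_metric_on U \<sigma>" "x \<in> U"
  shows "pos_def (\<sigma> x)"
  using assms by (simp add: riem_metric_on_def pos_def_def)

lemma gradsq_sigma_has_real_derivative:
  assumes "open U" "riem_metric_on U \<sigma>" "smooth_on U u" "x \<in> U"
  defines "w \<equiv> matrix_inv (\<sigma> x) *v Du u x"
  shows "((\<lambda>t. gradsq_sigma \<sigma> u (x + t *\<^sub>R axis j 1)) has_real_derivative
      2 * ((\<chi> a. pd j (pd a u) x) \<bullet> w) - w \<bullet> ((\<chi> a b. pd j (\<lambda>y. \<sigma> y $ a $ b) x) *v w)) (at 0)"
proof -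
  define \<gamma> where "\<gamma> t = x + t *\<^sub>R axis j 1" for t
  have "pd a u differentiable (at x)" for a
    using assms(3,4) unfolding smooth_on_def by (metis iter_pd.simps)
  then have dP: "((\<lambda>t. Du u (\<gamma> t) $ a) has_real_derivative (\<chi> a. pd j (pd a u) x) $ a) (at 0)" for a
    by (simp add: Du_def \<gamma>_def pd_has_real_derivative)
  have "(\<lambda>y. \<sigma> y $ a $ b) differentiable (at x)" for a b
    using assms(2,4) unfolding riem_metric_on_def smooth_on_def by (metis iter_pd.simps(1))
  from pd_has_real_derivative[OF this]
  have dS: "((\<lambda>t. \<sigma> (\<gamma> t) $ a $ b) has_real_derivative (\<chi> a b. pd j (\<lambda>y. \<sigma> y $ a $ b) x) $ a $ b) (at 0)"
    for a b
    by (simp add: \<gamma>_def)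
  have "(\<gamma> \<longlongrightarrow> x) (at 0)"
    unfolding \<gamma>_def by (auto intro!: tendsto_eq_intros)
  from topological_tendstoD[OF this assms(1,4)] have pos: "\<forall>\<^sub>F t in at 0. pos_def (\<sigma> (\<gamma> t))"
    by (rule eventually_mono) (rule pos_def_riem_metric[OF assms(2)])
  have pos0: "pos_def (\<sigma> (\<gamma> 0))" by (simp add: \<gamma>_def pos_def_riem_metric[OF assms(2,4)])
  from inverse_form_has_real_derivative[OF dP dS pos pos0] show ?thesis
    by (simp add: gradsq_sigma_def \<gamma>_def w_def)
qed

lemma pd_vfun:
  assumes "open U" "riem_metric_on U \<sigma>" "smooth_on U u" "x \<in> U" "gradsq_sigma \<sigma> u x < 1"
  defines "w \<equiv> matrix_inv (\<sigma> x) *v Du u x"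
  shows "pd j (vfun \<sigma> u) x = vfun \<sigma> u x ^ 3 *
      ((\<chi> a. pd j (pd a u) x) \<bullet> w - 1 / 2 * (w \<bullet> ((\<chi> a b. pd j (\<lambda>y. \<sigma> y $ a $ b) x) *v w)))"
proof -
  define g where "g t = gradsq_sigma \<sigma> u (x + t *\<^sub>R axis j 1)" for t
  define g' where "g' = 2 * ((\<chi> a. pd j (pd a u) x) \<bullet> w) - w \<bullet> ((\<chi> a b. pd j (\<lambda>y. \<sigma> y $ a $ b) x) *v w)"
  define r where "r = sqrt (1 - g 0)"
  have dg: "(g has_real_derivative g') (at 0)"
    unfolding g_def g'_def w_def by (rule gradsq_sigma_has_real_derivative[OF assms(1-4)])
  have pos: "0 < 1 - g 0" using assms(5) by (simp add: g_def)
  have "((\<lambda>t. sqrt (1 - g t)) has_real_derivative inverse r / 2 * (0 - g')) (at 0)"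
    unfolding r_def by (rule DERIV_chain2[OF DERIV_real_sqrt[OF pos] DERIV_diff[OF DERIV_const dg]])
  moreover have "sqrt (1 - g 0) \<noteq> 0" using pos by simp
  ultimately have "((\<lambda>t. inverse (sqrt (1 - g t))) has_real_derivative
      - (inverse r / 2 * (0 - g') * inverse (r ^ Suc (Suc 0)))) (at 0)"
    using DERIV_inverse_fun unfolding r_def by blast
  moreover have "(\<lambda>t. vfun \<sigma> u (x + t *\<^sub>R axis j 1)) = (\<lambda>t. inverse (sqrt (1 - g t)))"
    by (simp add: fun_eq_iff vfun_def g_def divide_inverse)
  ultimately have "pd j (vfun \<sigma> u) x = - (inverse r / 2 * (0 - g') * inverse (r ^ Suc (Suc 0)))"
    unfolding pd_def by (simp add: DERIV_imp_deriv)
  also have "\<dots> = inverse r ^ 3 * (g' / 2)"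
    by (simp add: power3_eq_cube inverse_mult_distrib)
  also have "inverse r = vfun \<sigma> u x" by (simp add: r_def vfun_def g_def divide_inverse)
  finally show ?thesis by (simp add: g'_def field_simps)
qed

lemma gind_eq_rank_one_update: "gind \<sigma> u x = (\<chi> i j. \<sigma> x $ i $ j - Du u x $ i * Du u x $ j)"
  by (simp add: gind_def Du_def)

lemma pos_def_ginv:
  assumes "pos_def (\<sigma> x)" "gradsq_sigma \<sigma> u x < 1"
  shows "pos_def (ginv \<sigma> u x)"
  using assms unfolding ginv_def gind_eq_rank_one_update gradsq_sigma_def
  by (intro pos_def_matrix_inv pos_def_rank_one_update)

lemma ginv_mult_Du:
  assumes "pos_def (\<sigma> x)" "gradsq_sigma \<sigma> u x < 1"
  shows "ginv \<sigma> u x *v Du u x = (vfun \<sigma> u x)\<^sup>2 *\<^sub>R (matrix_inv (\<sigma> x) *v Du u x)"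
  using rank_one_update_inverse[OF assms[unfolded gradsq_sigma_def]] assms(2)
  by (simp add: ginv_def gind_eq_rank_one_update vfun_def gradsq_sigma_def power_divide)

lemma ginner_grad_eq_inner: "ginner_grad \<sigma> u f h x = Du f x \<bullet> (ginv \<sigma> u x *v Du h x)"
  by (simp add: ginner_grad_def quadratic_form_sum Du_def mult_ac)

lemma christoffel_contraction:
  fixes \<sigma> :: "real^'n::finite \<Rightarrow> real^'n^'n" and p :: "real^'n"
  assumes "pos_def (\<sigma> x)"
  defines "w \<equiv> matrix_inv (\<sigma> x) *v p"
  shows "(\<Sum>a\<in>UNIV. w$a * (\<Sum>k\<in>UNIV. christoffel \<sigma> x k j a * p$k))
       = 1 / 2 * (w \<bullet> ((\<chi> a b. pd j (\<lambda>y. \<sigma> y $ a $ b) x) *v w))"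
proof -
  define D where "D i a b = pd i (\<lambda>y. \<sigma> y $ a $ b) x" for i a b
  have "transpose (matrix_inv (\<sigma> x)) = matrix_inv (\<sigma> x)"
    using pos_def_matrix_inv[OF assms(1)] by (simp add: pos_def_def)
  then have w: "(\<Sum>k\<in>UNIV. matrix_inv (\<sigma> x) $ k $ l * p$k) = w$l" for l
    by (simp add: w_def matrix_vector_mult_def symmetric_matrix_entry[of "matrix_inv (\<sigma> x)" _ l])
  have "(\<Sum>k\<in>UNIV. christoffel \<sigma> x k j a * p$k)
      = 1 / 2 * (\<Sum>l\<in>UNIV. (\<Sum>k\<in>UNIV. matrix_inv (\<sigma> x) $ k $ l * p$k) * (D j a l + D a j l - D l j a))"
    for a
    by (simp add: christoffel_def D_def sum_distrib_left sum_distrib_right mult_ac)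
      (subst sum.swap, simp)
  then have \<Gamma>: "(\<Sum>k\<in>UNIV. christoffel \<sigma> x k j a * p$k) = 1 / 2 * (\<Sum>l\<in>UNIV. w$l * (D j a l + D a j l - D l j a))"
    for a
    by (simp only: w)
  have "(\<Sum>a\<in>UNIV. w$a * (\<Sum>k\<in>UNIV. christoffel \<sigma> x k j a * p$k))
      = 1 / 2 * ((\<Sum>a\<in>UNIV. \<Sum>l\<in>UNIV. w$a * w$l * D j a l) + (\<Sum>a\<in>UNIV. \<Sum>l\<in>UNIV. w$a * w$l * D a j l)
          - (\<Sum>a\<in>UNIV. \<Sum>l\<in>UNIV. w$a * w$l * D l j a))"
    unfolding \<Gamma> by (simp add: sum_distrib_left algebra_simps sum.distrib sum_subtractf)
  \<comment> \<open>the last two terms of the Christoffel symbols cancel against each other\<close>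
  also have "(\<Sum>a\<in>UNIV. \<Sum>l\<in>UNIV. w$a * w$l * D a j l) = (\<Sum>a\<in>UNIV. \<Sum>l\<in>UNIV. w$a * w$l * D l j a)"
    by (subst sum.swap) (simp add: mult_ac)
  finally show ?thesis by (simp add: quadratic_form_sum D_def mult_ac)
qed

lemma secff_eq_christoffel:
  assumes "pos_def (\<sigma> x)"
  shows "secff \<sigma> u x i j
       = vfun \<sigma> u x * ((\<Sum>k\<in>UNIV. christoffel \<sigma> x k i j * Du u x $ k) - pd i (pd j u) x)"
  by (simp add: secff_def hprod_def unormal_def matrix_vector_mult_scaleR inner_vec_def
      invertible_matrix_inv_vector pos_def_invertible assms sum_distrib_left algebra_simps)

lemma Du_vfun:
  assumes "open U" "riem_metric_on U \<sigma>" "smooth_on U u" "x \<in> U" "gradsq_sigma \<sigma> u x < 1"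
  shows "Du (vfun \<sigma> u) x
       = - ((vfun \<sigma> u x)\<^sup>2 *\<^sub>R ((\<chi> i j. secff \<sigma> u x i j) *v (matrix_inv (\<sigma> x) *v Du u x)))"
proof -
  define w where "w = matrix_inv (\<sigma> x) *v Du u x"
  have S: "pos_def (\<sigma> x)" using assms(2,4) by (rule pos_def_riem_metric)
  have contraction: "(\<Sum>a\<in>UNIV. secff \<sigma> u x j a * w$a)
      = vfun \<sigma> u x * (1 / 2 * (w \<bullet> ((\<chi> a b. pd j (\<lambda>y. \<sigma> y $ a $ b) x) *v w))
          - (\<chi> a. pd j (pd a u) x) \<bullet> w)" for j
  proof -
    have "(\<Sum>a\<in>UNIV. secff \<sigma> u x j a * w$a)
        = vfun \<sigma> u x * ((\<Sum>a\<in>UNIV. w$a * (\<Sum>k\<in>UNIV. christoffel \<sigma> x k j a * Du u x $ k))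
            - (\<chi> a. pd j (pd a u) x) \<bullet> w)"
      by (simp add: secff_eq_christoffel[where \<sigma> = \<sigma> and x = x, OF S] inner_vec_def algebra_simps
          sum_subtractf sum_distrib_left)
    then show ?thesis unfolding w_def christoffel_contraction[where \<sigma> = \<sigma> and x = x, OF S] .
  qed
  show ?thesis
    unfolding w_def[symmetric]
  proof (subst vec_eq_iff, intro allI)
    fix j
    have "Du (vfun \<sigma> u) x $ j = - ((vfun \<sigma> u x)\<^sup>2 * (\<Sum>a\<in>UNIV. secff \<sigma> u x j a * w$a))"
      unfolding Du_def vec_lambda_beta pd_vfun[OF assms, of j, folded w_def] contraction
      by (simp add: power2_eq_square power3_eq_cube algebra_simps)
    then show "Du (vfun \<sigma> u) x $ j = (- ((vfun \<sigma> u x)\<^sup>2 *\<^sub>R ((\<chi> i j. secff \<sigma> u x i j) *v w))) $ j"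
      by (simp add: matrix_vector_mult_def)
  qed
qed

theorem lemma7p3:
  fixes U :: "(real^'n::finite) set"
    and \<sigma> :: "real^'n \<Rightarrow> real^'n^'n"
    and u :: "real^'n \<Rightarrow> real"
  assumes "open U"
    and "riem_metric_on U \<sigma>"
    and "smooth_on U u"
    and "\<forall>x\<in>U. gradsq_sigma \<sigma> u x < 1"
  shows "\<forall>x\<in>U. \<bar>ginner_grad \<sigma> u u (vfun \<sigma> u) x\<bar>
                 \<le> normA \<sigma> u x * ginner_grad \<sigma> u u u x"
proof
  fix x assume x: "x \<in> U"
  have S: "pos_def (\<sigma> x)" using assms(2) x by (rule pos_def_riem_metric)
  have s: "gradsq_sigma \<sigma> u x < 1" using assms(4) x by blast
  define G where "G = ginv \<sigma> u x"
  define A where "A = (\<chi> i j. secff \<sigma> u x i j)"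
  define p where "p = Du u x"
  have G: "pos_def G" unfolding G_def by (rule pos_def_ginv[OF S s])
  have "ginner_grad \<sigma> u u (vfun \<sigma> u) x = (G *v p) \<bullet> Du (vfun \<sigma> u) x"
    using G by (simp add: ginner_grad_eq_inner G_def p_def symmetric_matrix_inner pos_def_def)
  also have "\<dots> = - ((G *v p) \<bullet> (A *v (G *v p)))"
    by (simp add: Du_vfun[OF assms(1-3) x s] ginv_mult_Du[OF S s] G_def A_def p_def
        matrix_vector_mult_scaleR)
  finally have "\<bar>ginner_grad \<sigma> u u (vfun \<sigma> u) x\<bar> = \<bar>(G *v p) \<bullet> (A *v (G *v p))\<bar>" by simp
  moreover have "normA \<sigma> u x = sqrt (\<Sum>i\<in>UNIV. \<Sum>j\<in>UNIV. \<Sum>k\<in>UNIV. \<Sum>l\<in>UNIV. G$i$k * G$j$l * A$i$j * A$k$l)"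
    by (simp add: normA_def G_def A_def)
  moreover have "ginner_grad \<sigma> u u u x = p \<bullet> (G *v p)"
    by (simp add: ginner_grad_eq_inner G_def p_def)
  ultimately show "\<bar>ginner_grad \<sigma> u u (vfun \<sigma> u) x\<bar> \<le> normA \<sigma> u x * ginner_grad \<sigma> u u u x"
    using pos_def_tensor_form_bound[OF G, of p A] by simp
qed

end
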